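(* If $G$ is a $3$-edge-connected graph admitting a nowhere-zero $4$-flow, then $fn(G)\le 2$. In particular, $fn(G)=2$ for every $3$-edge-connected $3$-edge-colourable graph $G$.
   Context: All graphs are finite. An orientation is strong if for every ordered pair of distinct vertices $u,v$ there is a directed $uv$-path. An edge $e$ is deletable in an orientation $(G,o)$ if the restriction of $o$ to $E(G)\setminus\{e\}$ is a strong orientation of $G-e$. For a $3$-edge-connected graph $G$, the Frank number $fn(G)$ is the minimum number $k$ such that $G$ admits $k$ orientations with the property that every edge of $G$ is deletable in at least one of them. A nowhere-zero $k$-flow on $G$ is a pair $(o,f)$ of an orientation $o$ and a map $f:E(G)\to\{\pm1,\dots,\pm(k-1)\}$ such that at every vertex the sum of $f$ over incoming edges equals the sum of $f$ over outgoing edges. *)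

theory Defs
  imports Main
begin

text \<open>A finite loopless multigraph is given by a vertex set V, an edge set E and a map
  ends assigning to each edge its two (distinct) end vertices, listed in an arbitrary
  reference order.  An orientation is a map ori :: 'e => bool: ori e = True means e is directed
  from fst (ends e) to snd (ends e), otherwise in the reverse direction.\<close>

definition multigraph :: "'v set \<Rightarrow> 'e set \<Rightarrow> ('e \<Rightarrow> 'v \<times> 'v) \<Rightarrow> bool" where
  "multigraph V E ends \<longleftrightarrow> finite V \<and> finite E \<and>
     (\<forall>e\<in>E. fst (ends e) \<in> V \<and> snd (ends e) \<in> V \<and> fst (ends e) \<noteq> snd (ends e))"

definition tail :: "('e \<Rightarrow> 'v \<times> 'v) \<Rightarrow> ('e \<Rightarrow> bool) \<Rightarrow> 'e \<Rightarrow> 'v" where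
  "tail ends ori e = (if ori e then fst (ends e) else snd (ends e))"

definition head :: "('e \<Rightarrow> 'v \<times> 'v) \<Rightarrow> ('e \<Rightarrow> bool) \<Rightarrow> 'e \<Rightarrow> 'v" where
  "head ends ori e = (if ori e then snd (ends e) else fst (ends e))"

definition arcs :: "('e \<Rightarrow> 'v \<times> 'v) \<Rightarrow> ('e \<Rightarrow> bool) \<Rightarrow> 'e set \<Rightarrow> ('v \<times> 'v) set" where
  "arcs ends ori F = {(tail ends ori e, head ends ori e) | e. e \<in> F}"

definition uedges :: "('e \<Rightarrow> 'v \<times> 'v) \<Rightarrow> 'e set \<Rightarrow> ('v \<times> 'v) set" where
  "uedges ends F = {ends e | e. e \<in> F} \<union> {prod.swap (ends e) | e. e \<in> F}"

definition connected_graph :: "'v set \<Rightarrow> ('e \<Rightarrow> 'v \<times> 'v) \<Rightarrow> 'e set \<Rightarrow> bool" where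
  "connected_graph V ends F \<longleftrightarrow> (\<forall>u\<in>V. \<forall>v\<in>V. (u, v) \<in> (uedges ends F)\<^sup>*)"

definition k_edge_connected :: "nat \<Rightarrow> 'v set \<Rightarrow> 'e set \<Rightarrow> ('e \<Rightarrow> 'v \<times> 'v) \<Rightarrow> bool" where
  "k_edge_connected k V E ends \<longleftrightarrow> multigraph V E ends \<and> 2 \<le> card V \<and>
     (\<forall>F \<subseteq> E. card F < k \<longrightarrow> connected_graph V ends (E - F))"

definition strong :: "'v set \<Rightarrow> ('e \<Rightarrow> 'v \<times> 'v) \<Rightarrow> 'e set \<Rightarrow> ('e \<Rightarrow> bool) \<Rightarrow> bool" where
  "strong V ends F ori \<longleftrightarrow> (\<forall>u\<in>V. \<forall>v\<in>V. u \<noteq> v \<longrightarrow> (u, v) \<in> (arcs ends ori F)\<^sup>+)"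

definition deletable :: "'v set \<Rightarrow> 'e set \<Rightarrow> ('e \<Rightarrow> 'v \<times> 'v) \<Rightarrow> ('e \<Rightarrow> bool) \<Rightarrow> 'e \<Rightarrow> bool" where
  "deletable V E ends ori e \<longleftrightarrow> e \<in> E \<and> strong V ends (E - {e}) ori"

definition frank_number :: "'v set \<Rightarrow> 'e set \<Rightarrow> ('e \<Rightarrow> 'v \<times> 'v) \<Rightarrow> nat" where
  "frank_number V E ends = (LEAST k. \<exists>os :: nat \<Rightarrow> ('e \<Rightarrow> bool).
      \<forall>e\<in>E. \<exists>i<k. deletable V E ends (os i) e)"

definition nowhere_zero_flow :: "nat \<Rightarrow> 'v set \<Rightarrow> 'e set \<Rightarrow> ('e \<Rightarrow> 'v \<times> 'v) \<Rightarrow> bool" where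
  "nowhere_zero_flow k V E ends \<longleftrightarrow> (\<exists>(ori :: 'e \<Rightarrow> bool) (f :: 'e \<Rightarrow> int).
      (\<forall>e\<in>E. f e \<noteq> 0 \<and> \<bar>f e\<bar> \<le> int k - 1) \<and>
      (\<forall>v\<in>V. (\<Sum>e\<in>{e\<in>E. head ends ori e = v}. f e) = (\<Sum>e\<in>{e\<in>E. tail ends ori e = v}. f e)))"

definition three_edge_colourable :: "'v set \<Rightarrow> 'e set \<Rightarrow> ('e \<Rightarrow> 'v \<times> 'v) \<Rightarrow> bool" where
  "three_edge_colourable V E ends \<longleftrightarrow> (\<exists>c :: 'e \<Rightarrow> nat. (\<forall>e\<in>E. c e < 3) \<and>
     (\<forall>e1\<in>E. \<forall>e2\<in>E. e1 \<noteq> e2 \<and>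
        {fst (ends e1), snd (ends e1)} \<inter> {fst (ends e2), snd (ends e2)} \<noteq> {} \<longrightarrow> c e1 \<noteq> c e2))"

end

theory Submission
  imports Defs
begin

text \<open>A nowhere-zero 4-flow yields two even subgraphs C1, C2 covering E: the edges of odd
  flow value, and the edges on which half of the flow minus a \<plusminus>1-circulation on C1 is odd.
  Each even subgraph carries a \<plusminus>1-circulation \<phi>i, and on every edge both \<phi>1 + 2\<phi>2 and
  2\<phi>1 - \<phi>2 are nonzero and one of them is \<plusminus>1.  In a 3-edge-connected graph, orienting
  the edges along the sign of a nowhere-zero integral circulation makes every edge of value \<plusminus>1
  deletable, so these two circulations give two orientations as required.  In a
  3-edge-colourable graph the complements of two colour classes form such a cover, and a single
  orientation never suffices: at a vertex of degree 3 it has at most one outgoing or at most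
  one incoming arc.\<close>

definition incidence :: "'v \<times> 'v \<Rightarrow> 'v \<Rightarrow> int" where
  "incidence p v = of_bool (snd p = v) - of_bool (fst p = v)"

definition circulation :: "'e set \<Rightarrow> ('e \<Rightarrow> 'v \<times> 'v) \<Rightarrow> ('e \<Rightarrow> int) \<Rightarrow> bool" where
  "circulation C ends h \<longleftrightarrow> (\<forall>v. (\<Sum>e\<in>C. h e * incidence (ends e) v) = 0)"

text \<open>Every vertex has even degree in C, as in-degree minus out-degree is congruent to the degree
  modulo 2.\<close>

definition even_subgraph :: "('e \<Rightarrow> 'v \<times> 'v) \<Rightarrow> 'e set \<Rightarrow> bool" where
  "even_subgraph ends C \<longleftrightarrow> (\<forall>v. even (\<Sum>e\<in>C. incidence (ends e) v))"

lemma incidence_loop [simp]: "incidence (a, a) v = 0"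
  by (simp add: incidence_def)

lemma incidence_outside:
  "multigraph V E ends \<Longrightarrow> e \<in> E \<Longrightarrow> v \<notin> V \<Longrightarrow> incidence (ends e) v = 0"
  by (auto simp: multigraph_def incidence_def)

lemma sum_incidence:
  "finite X \<Longrightarrow> (\<Sum>x\<in>X. incidence p x) = of_bool (snd p \<in> X) - of_bool (fst p \<in> X)"
  by (induction X rule: finite_induct) (auto simp: incidence_def)

lemma even_sum_odd_coeffs:
  fixes \<psi> x :: "'a \<Rightarrow> int"
  assumes "\<forall>e\<in>C. odd (\<psi> e)"
  shows "even (\<Sum>e\<in>C. \<psi> e * x e) \<longleftrightarrow> even (\<Sum>e\<in>C. x e)"
proof -
  have "(\<Sum>e\<in>C. \<psi> e * x e) = (\<Sum>e\<in>C. x e) + (\<Sum>e\<in>C. (\<psi> e - 1) * x e)"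
    by (simp add: sum.distrib[symmetric] algebra_simps)
  moreover have "even (\<Sum>e\<in>C. (\<psi> e - 1) * x e)"
    using assms by (intro dvd_sum) auto
  ultimately show ?thesis by simp
qed

lemma circulation_lincomb:
  assumes "circulation E ends h1" "circulation E ends h2"
  shows "circulation E ends (\<lambda>e. a * h1 e + b * h2 e)"
proof -
  have "(\<Sum>e\<in>E. (a * h1 e + b * h2 e) * incidence (ends e) v)
      = a * (\<Sum>e\<in>E. h1 e * incidence (ends e) v) + b * (\<Sum>e\<in>E. h2 e * incidence (ends e) v)" for v
    by (simp add: sum.distrib sum_distrib_left algebra_simps)
  then show ?thesis using assms by (simp add: circulation_def)
qed

lemma circulation_half:
  assumes "circulation E ends h" "\<forall>e\<in>E. even (h e)"
  shows "circulation E ends (\<lambda>e. h e div 2)"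
  unfolding circulation_def
proof
  fix v
  have "2 * (\<Sum>e\<in>E. h e div 2 * incidence (ends e) v) = (\<Sum>e\<in>E. h e * incidence (ends e) v)"
    unfolding sum_distrib_left using assms(2) by (intro sum.cong) auto
  then show "(\<Sum>e\<in>E. h e div 2 * incidence (ends e) v) = 0"
    using assms(1) by (simp add: circulation_def)
qed

lemma circulation_extend:
  assumes "finite E" "C \<subseteq> E" "circulation C ends \<phi>"
  shows "circulation E ends (\<lambda>e. if e \<in> C then \<phi> e else 0)"
proof -
  have "(\<Sum>e\<in>E. (if e \<in> C then \<phi> e else 0) * incidence (ends e) v)
      = (\<Sum>e\<in>C. \<phi> e * incidence (ends e) v)" for v
    by (subst sum.mono_neutral_right[OF assms(1,2)]) auto
  then show ?thesis using assms(3) by (simp add: circulation_def)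
qed

lemma even_subgraph_odd_part:
  assumes "finite E" "circulation E ends h"
  shows "even_subgraph ends {e\<in>E. odd (h e)}"
  unfolding even_subgraph_def
proof
  fix v
  define C where "C = {e\<in>E. odd (h e)}"
  have "0 = (\<Sum>e\<in>E - C. h e * incidence (ends e) v) + (\<Sum>e\<in>C. h e * incidence (ends e) v)"
    using assms by (simp add: circulation_def sum.subset_diff[of C E] C_def)
  moreover have "even (\<Sum>e\<in>E - C. h e * incidence (ends e) v)"
    by (intro dvd_sum) (auto simp: C_def)
  ultimately have "even (\<Sum>e\<in>C. h e * incidence (ends e) v)"
    by (simp add: eq_neg_iff_add_eq_0[symmetric])
  then show "even (\<Sum>e\<in>C. incidence (ends e) v)"
    using even_sum_odd_coeffs[of C h] by (simp add: C_def)
qed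

lemma incidence_through:
  assumes "incidence p b \<noteq> 0"
  obtains s c where "s * s = 1" "\<And>v. incidence p v = s * incidence (c, b) v"
proof -
  obtain x y where p: "p = (x, y)" by fastforce
  show ?thesis
  proof (cases "y = b")
    case True
    then show ?thesis using that[of 1 x] p by simp
  next
    case False
    then have "x = b" using assms p by (auto simp: incidence_def)
    then show ?thesis using that[of "-1" y] p by (simp add: incidence_def)
  qed
qed

text \<open>Splitting off: the path e1, e2 through b is replaced by the single edge from a to c.\<close>

lemma sum_split_off:
  fixes \<phi> :: "'e \<Rightarrow> int"
  assumes "finite C" "e1 \<in> C" "e2 \<in> C" "e1 \<noteq> e2" "ends e1 = (a, b)"
    and "s * s = 1" "\<And>v. incidence (ends e2) v = s * incidence (c, b) v"
  shows "(\<Sum>e\<in>C - {e2}. \<phi> e * incidence ((ends(e1 := (a, c))) e) v)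
       = (\<Sum>e\<in>C. (\<phi>(e2 := - s * \<phi> e1)) e * incidence (ends e) v)"
proof -
  let ?rest = "\<lambda>g. \<Sum>e\<in>C - {e2} - {e1}. g e * incidence (ends e) v"
  have "(\<Sum>e\<in>C - {e2}. \<phi> e * incidence ((ends(e1 := (a, c))) e) v)
      = \<phi> e1 * incidence (a, c) v + ?rest \<phi>"
    using assms(1-4) by (simp add: sum.remove)
  also have "incidence (a, c) v = incidence (a, b) v - s * incidence (ends e2) v"
  proof -
    have "s * incidence (ends e2) v = incidence (c, b) v"
      using assms(6,7) by (simp flip: mult.assoc)
    then show ?thesis by (simp add: incidence_def)
  qed
  also have "?rest \<phi> = ?rest (\<phi>(e2 := - s * \<phi> e1))"
    by (intro sum.cong) auto
  also have "\<phi> e1 * (incidence (a, b) v - s * incidence (ends e2) v)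
      + ?rest (\<phi>(e2 := - s * \<phi> e1))
      = (\<Sum>e\<in>C. (\<phi>(e2 := - s * \<phi> e1)) e * incidence (ends e) v)"
    using assms(1-5)
    by (simp add: sum.remove[of C e2] sum.remove[of "C - {e2}" e1] algebra_simps)
  finally show ?thesis .
qed

lemma split_off:
  assumes "finite C" "e1 \<in> C" "e2 \<in> C" "e1 \<noteq> e2" "ends e1 = (a, b)"
    and "s * s = 1" "\<And>v. incidence (ends e2) v = s * incidence (c, b) v"
  shows "even_subgraph ends C \<Longrightarrow> even_subgraph (ends(e1 := (a, c))) (C - {e2})"
    and "circulation (C - {e2}) (ends(e1 := (a, c))) \<phi> \<Longrightarrow> circulation C ends (\<phi>(e2 := - s * \<phi> e1))"
proof -
  note split = sum_split_off[OF assms]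
  have "s = 1 \<or> s = -1"
    using assms(6) by (simp add: zmult_eq_1_iff)
  then have "even (\<Sum>e\<in>C. ((\<lambda>_. 1)(e2 := - s * 1)) e * incidence (ends e) v)
      \<longleftrightarrow> even (\<Sum>e\<in>C. incidence (ends e) v)" for v
    by (intro even_sum_odd_coeffs) auto
  then show "even_subgraph ends C \<Longrightarrow> even_subgraph (ends(e1 := (a, c))) (C - {e2})"
    using split[of "\<lambda>_. 1"] by (simp add: even_subgraph_def)
  show "circulation (C - {e2}) (ends(e1 := (a, c))) \<phi> \<Longrightarrow> circulation C ends (\<phi>(e2 := - s * \<phi> e1))"
    using split[of \<phi>] by (simp add: circulation_def)
qed

lemma remove_loop:
  assumes "finite C" "e1 \<in> C" "ends e1 = (a, a)"
  shows "even_subgraph ends C \<Longrightarrow> even_subgraph ends (C - {e1})"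
    and "circulation (C - {e1}) ends \<phi> \<Longrightarrow> circulation C ends (\<phi>(e1 := 1))"
proof -
  have drop_loop: "(\<Sum>e\<in>C. g e * incidence (ends e) v) = (\<Sum>e\<in>C - {e1}. g e * incidence (ends e) v)"
    for g v using assms by (simp add: sum.remove)
  show "even_subgraph ends C \<Longrightarrow> even_subgraph ends (C - {e1})"
    using drop_loop[of "\<lambda>_. 1"] by (simp add: even_subgraph_def)
  have "(\<Sum>e\<in>C - {e1}. (\<phi>(e1 := 1)) e * incidence (ends e) v)
      = (\<Sum>e\<in>C - {e1}. \<phi> e * incidence (ends e) v)" for v
    by (intro sum.cong) auto
  then show "circulation (C - {e1}) ends \<phi> \<Longrightarrow> circulation C ends (\<phi>(e1 := 1))"
    by (simp add: circulation_def drop_loop)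
qed

lemma exists_edge_through_head:
  assumes "finite C" "even_subgraph ends C" "e1 \<in> C" "ends e1 = (a, b)" "a \<noteq> b"
  obtains e2 where "e2 \<in> C" "e2 \<noteq> e1" "incidence (ends e2) b \<noteq> 0"
proof -
  have "even (\<Sum>e\<in>C. incidence (ends e) b)"
    using assms(2) by (simp add: even_subgraph_def)
  then have "odd (\<Sum>e\<in>C - {e1}. incidence (ends e) b)"
    using assms(1,3-5) by (simp add: sum.remove incidence_def)
  then have "(\<Sum>e\<in>C - {e1}. incidence (ends e) b) \<noteq> 0"
    by (intro notI) simp
  then obtain e2 where "e2 \<in> C - {e1}" "incidence (ends e2) b \<noteq> 0"
    by (meson sum.neutral)
  then show ?thesis using that by blast
qed

lemma even_subgraph_signing:
  assumes "finite C" "even_subgraph ends C"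
  shows "\<exists>\<phi>. (\<forall>e\<in>C. \<phi> e = 1 \<or> \<phi> e = -1) \<and> circulation C ends \<phi>"
  using assms
proof (induction "card C" arbitrary: C ends rule: less_induct)
  case less
  show ?case
  proof (cases "C = {}")
    case True
    then show ?thesis by (simp add: circulation_def)
  next
    case False
    then obtain e1 a b where e1: "e1 \<in> C" "ends e1 = (a, b)"
      by (meson ex_in_conv prod.exhaust)
    show ?thesis
    proof (cases "a = b")
      case True
      have "ends e1 = (a, a)" using e1(2) True by simp
      note loop = remove_loop[of C e1 ends a, OF less.prems(1) e1(1) this]
      obtain \<phi> where \<phi>: "\<forall>e\<in>C - {e1}. \<phi> e = 1 \<or> \<phi> e = -1" "circulation (C - {e1}) ends \<phi>"
        using less.hyps[of "C - {e1}"] less.prems loop(1) e1(1)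
        by (meson card_Diff1_less finite_Diff)
      then show ?thesis
        using loop(2) by (intro exI[of _ "\<phi>(e1 := 1)"]) auto
    next
      case False
      obtain e2 where e2: "e2 \<in> C" "e2 \<noteq> e1" "incidence (ends e2) b \<noteq> 0"
        using exists_edge_through_head[OF less.prems e1 False] .
      obtain s c where sc: "s * s = 1" "\<And>v. incidence (ends e2) v = s * incidence (c, b) v"
        by (rule incidence_through[OF e2(3)]) blast
      note split = split_off[of C e1 e2 ends a b s c,
          OF less.prems(1) e1(1) e2(1) e2(2)[symmetric] e1(2) sc]
      obtain \<phi> where \<phi>: "\<forall>e\<in>C - {e2}. \<phi> e = 1 \<or> \<phi> e = -1"
        "circulation (C - {e2}) (ends(e1 := (a, c))) \<phi>"
        using less.hyps[of "C - {e2}"] less.prems split(1) e2(1)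
        by (meson card_Diff1_less finite_Diff)
      have "s = 1 \<or> s = -1" "\<phi> e1 = 1 \<or> \<phi> e1 = -1"
        using sc(1) \<phi>(1) e1(1) e2(2) by (auto simp: zmult_eq_1_iff)
      then show ?thesis
        using \<phi> split(2) by (intro exI[of _ "\<phi>(e2 := - s * \<phi> e1)"]) auto
    qed
  qed
qed

definition cut_edges :: "'e set \<Rightarrow> ('e \<Rightarrow> 'v \<times> 'v) \<Rightarrow> 'v set \<Rightarrow> 'e set" where
  "cut_edges E ends X = {e\<in>E. (fst (ends e) \<in> X) \<noteq> (snd (ends e) \<in> X)}"

definition incident_edges :: "'e set \<Rightarrow> ('e \<Rightarrow> 'v \<times> 'v) \<Rightarrow> 'v \<Rightarrow> 'e set" where
  "incident_edges E ends v = {e\<in>E. fst (ends e) = v \<or> snd (ends e) = v}"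

lemma card_cut_edges_ge:
  assumes "k_edge_connected k V E ends" "u \<in> V" "w \<in> V" "u \<in> X" "w \<notin> X"
  shows "k \<le> card (cut_edges E ends X)"
proof (rule ccontr)
  assume "\<not> k \<le> card (cut_edges E ends X)"
  then have "connected_graph V ends (E - cut_edges E ends X)"
    using assms(1) by (auto simp: k_edge_connected_def cut_edges_def)
  then have "(u, w) \<in> (uedges ends (E - cut_edges E ends X))\<^sup>*"
    using assms(2,3) by (simp add: connected_graph_def)
  then have "u \<in> X \<longleftrightarrow> w \<in> X"
  proof (induction rule: rtrancl_induct)
    case (step y z)
    then obtain e where "e \<in> E - cut_edges E ends X" "(y, z) = ends e \<or> (y, z) = prod.swap (ends e)"
      by (auto simp: uedges_def)
    then have "y \<in> X \<longleftrightarrow> z \<in> X" by (cases "ends e") (auto simp: cut_edges_def)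
    then show ?case using step.IH by simp
  qed simp
  then show False using assms(4,5) by simp
qed

lemma exists_other_vertex:
  assumes "finite V" "2 \<le> card V" "v \<in> V"
  obtains w where "w \<in> V" "w \<noteq> v"
proof -
  have "\<not> V \<subseteq> {v}"
    using assms(1,2) card_mono[of "{v}" V] by auto
  then show ?thesis using that by blast
qed

lemma card_incident_edges_ge:
  assumes "k_edge_connected k V E ends" "v \<in> V"
  shows "k \<le> card (incident_edges E ends v)"
proof -
  have mg: "multigraph V E ends" and "2 \<le> card V"
    using assms(1) by (auto simp: k_edge_connected_def)
  then obtain w where "w \<in> V" "w \<noteq> v"
    using assms(2) exists_other_vertex by (metis multigraph_def)
  then have "k \<le> card (cut_edges E ends {v})"
    using card_cut_edges_ge[OF assms(1,2)] by simp
  moreover have "cut_edges E ends {v} = incident_edges E ends v"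
    using mg by (auto simp: cut_edges_def incident_edges_def multigraph_def)
  ultimately show ?thesis by simp
qed

lemma closed_set_of_not_strong:
  assumes "multigraph V E ends" "F \<subseteq> E" "\<not> strong V ends F ori"
  obtains X u w where "X \<subseteq> V" "u \<in> X" "w \<in> V" "w \<notin> X"
    "\<And>e. e \<in> F \<Longrightarrow> tail ends ori e \<in> X \<Longrightarrow> head ends ori e \<in> X"
proof -
  let ?A = "arcs ends ori F"
  obtain u w where uw: "u \<in> V" "w \<in> V" "u \<noteq> w" "(u, w) \<notin> ?A\<^sup>+"
    using assms(3) by (auto simp: strong_def)
  define X where "X = {x. (u, x) \<in> ?A\<^sup>*}"
  have "X \<subseteq> V"
  proof
    fix x assume "x \<in> X"
    then have "(u, x) \<in> ?A\<^sup>*" by (simp add: X_def)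
    then show "x \<in> V"
    proof (induction rule: rtrancl_induct)
      case (step y z)
      then obtain e where "e \<in> F" "z = head ends ori e"
        by (auto simp: arcs_def)
      then show ?case
        using assms(1,2) by (auto simp: head_def multigraph_def)
    qed (use uw in simp)
  qed
  moreover have "w \<notin> X"
    using uw by (auto simp: X_def rtrancl_eq_or_trancl)
  moreover have "head ends ori e \<in> X" if "e \<in> F" "tail ends ori e \<in> X" for e
    using that by (auto simp: X_def arcs_def intro: rtrancl_into_rtrancl)
  moreover have "u \<in> X" by (simp add: X_def)
  ultimately show ?thesis
    using that uw(2) by blast
qed

lemma cut_net_inflow_eq_0:
  assumes "finite E" "finite X" "circulation E ends F"
  shows "(\<Sum>e\<in>cut_edges E ends X. F e * (of_bool (snd (ends e) \<in> X) - of_bool (fst (ends e) \<in> X)))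
    = 0"
proof -
  have "(\<Sum>e\<in>cut_edges E ends X. F e * (of_bool (snd (ends e) \<in> X) - of_bool (fst (ends e) \<in> X)))
      = (\<Sum>e\<in>E. F e * (of_bool (snd (ends e) \<in> X) - of_bool (fst (ends e) \<in> X)))"
    using assms(1) by (intro sum.mono_neutral_left) (auto simp: cut_edges_def)
  also have "\<dots> = (\<Sum>e\<in>E. F e * (\<Sum>x\<in>X. incidence (ends e) x))"
    using assms(2) by (simp add: sum_incidence)
  also have "\<dots> = (\<Sum>x\<in>X. \<Sum>e\<in>E. F e * incidence (ends e) x)"
    by (subst sum.swap) (simp add: sum_distrib_left)
  also have "\<dots> = 0"
    using assms(3) by (simp add: circulation_def)
  finally show ?thesis .
qed

text \<open>A set X closed under the arcs other than e has at least three cut edges; all of them except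
  e carry flow at least 1 into X and e carries at most 1 out of X, contradicting conservation of
  F on X.\<close>

lemma deletable_of_circulation:
  assumes kc: "k_edge_connected 3 V E ends" and F: "circulation E ends F"
    and nowhere_zero: "\<forall>e\<in>E. F e \<noteq> 0" and "e \<in> E" and unit: "\<bar>F e\<bar> = 1"
  shows "deletable V E ends (\<lambda>x. F x > 0) e"
proof (rule ccontr)
  define ori where "ori = (\<lambda>x. F x > 0)"
  have mg: "multigraph V E ends" and "finite E" "finite V"
    using kc by (auto simp: k_edge_connected_def multigraph_def)
  assume "\<not> deletable V E ends (\<lambda>x. F x > 0) e"
  then have "\<not> strong V ends (E - {e}) ori"
    using \<open>e \<in> E\<close> by (simp add: deletable_def ori_def)
  then obtain X u w where X: "X \<subseteq> V" "u \<in> X" "w \<in> V" "w \<notin> X"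
    and closed: "\<And>e'. e' \<in> E - {e} \<Longrightarrow> tail ends ori e' \<in> X \<Longrightarrow> head ends ori e' \<in> X"
    by (rule closed_set_of_not_strong[OF mg Diff_subset]) blast
  have "finite X" using X(1) \<open>finite V\<close> finite_subset by blast
  define K where "K = cut_edges E ends X"
  define inflow where "inflow e' = F e' * (of_bool (snd (ends e') \<in> X) - of_bool (fst (ends e') \<in> X))"
    for e'
  have "3 \<le> card K"
    unfolding K_def using card_cut_edges_ge[OF kc] X by blast
  have total: "(\<Sum>e'\<in>K. inflow e') = 0"
    using cut_net_inflow_eq_0[OF \<open>finite E\<close> \<open>finite X\<close> F] by (simp add: K_def inflow_def)
  have into_X: "1 \<le> inflow e'" if "e' \<in> K - {e}" for e'
  proof -
    have "e' \<in> E - {e}" "F e' \<noteq> 0" using that nowhere_zero by (auto simp: K_def cut_edges_def)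
    then show ?thesis
      using that closed[of e'] by (cases "0 < F e'")
        (auto simp: K_def cut_edges_def inflow_def ori_def tail_def head_def)
  qed
  have "int (card K) - 2 \<le> (\<Sum>e'\<in>K - {e}. inflow e') + (if e \<in> K then inflow e else 0)"
  proof -
    have "int (card (K - {e})) \<le> (\<Sum>e'\<in>K - {e}. inflow e')"
      using sum_bounded_below[of "K - {e}" 1 inflow] into_X by simp
    moreover have "-1 \<le> inflow e" using unit by (auto simp: inflow_def)
    ultimately show ?thesis by (cases "e \<in> K") auto
  qed
  also have "\<dots> = (\<Sum>e'\<in>K. inflow e')"
    using \<open>finite E\<close> by (cases "e \<in> K") (auto simp: sum.remove K_def cut_edges_def)
  finally show False using total \<open>3 \<le> card K\<close> by simp
qed

definition frank_cover :: "'v set \<Rightarrow> 'e set \<Rightarrow> ('e \<Rightarrow> 'v \<times> 'v) \<Rightarrow> nat \<Rightarrow> bool" where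
  "frank_cover V E ends k \<longleftrightarrow>
     (\<exists>os :: nat \<Rightarrow> ('e \<Rightarrow> bool). \<forall>e\<in>E. \<exists>i<k. deletable V E ends (os i) e)"

lemma frank_number_eq_Least: "frank_number V E ends = (LEAST k. frank_cover V E ends k)"
  by (simp add: frank_number_def frank_cover_def)

lemma frank_cover_mono: "frank_cover V E ends j \<Longrightarrow> j \<le> k \<Longrightarrow> frank_cover V E ends k"
  unfolding frank_cover_def by (meson order_less_le_trans)

lemma frank_number_le: "frank_cover V E ends k \<Longrightarrow> frank_number V E ends \<le> k"
  unfolding frank_number_eq_Least by (rule Least_le)

lemma frank_number_eqI:
  assumes "frank_cover V E ends k" "\<not> frank_cover V E ends (k - 1)"
  shows "frank_number V E ends = k"
  unfolding frank_number_eq_Least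
proof (rule Least_equality)
  fix j assume "frank_cover V E ends j"
  then have "\<not> j \<le> k - 1"
    using assms(2) frank_cover_mono by blast
  then show "k \<le> j" by simp
qed (rule assms(1))

lemma signed_circulation_of_even_subgraph:
  assumes "finite E" "C \<subseteq> E" "even_subgraph ends C"
  obtains \<phi> where "circulation E ends \<phi>"
    "\<And>e. e \<in> C \<Longrightarrow> \<phi> e = 1 \<or> \<phi> e = -1" "\<And>e. e \<notin> C \<Longrightarrow> \<phi> e = 0"
proof -
  obtain \<phi> where "\<forall>e\<in>C. \<phi> e = 1 \<or> \<phi> e = -1" "circulation C ends \<phi>"
    using even_subgraph_signing assms finite_subset by metis
  then show ?thesis
    using that[of "\<lambda>e. if e \<in> C then \<phi> e else 0"] circulation_extend[OF assms(1,2)] by auto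
qed

lemma frank_cover_2_of_even_cover:
  assumes kc: "k_edge_connected 3 V E ends"
    and "even_subgraph ends C1" "even_subgraph ends C2" "C1 \<union> C2 = E"
  shows "frank_cover V E ends 2"
proof -
  have "finite E" using kc by (simp add: k_edge_connected_def multigraph_def)
  obtain \<phi>1 where \<phi>1: "circulation E ends \<phi>1"
    "\<And>e. e \<in> C1 \<Longrightarrow> \<phi>1 e = 1 \<or> \<phi>1 e = -1" "\<And>e. e \<notin> C1 \<Longrightarrow> \<phi>1 e = 0"
    using signed_circulation_of_even_subgraph[OF \<open>finite E\<close> _ assms(2)] assms(4) by blast
  obtain \<phi>2 where \<phi>2: "circulation E ends \<phi>2"
    "\<And>e. e \<in> C2 \<Longrightarrow> \<phi>2 e = 1 \<or> \<phi>2 e = -1" "\<And>e. e \<notin> C2 \<Longrightarrow> \<phi>2 e = 0"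
    using signed_circulation_of_even_subgraph[OF \<open>finite E\<close> _ assms(3)] assms(4) by blast
  define F1 where "F1 e = 1 * \<phi>1 e + 2 * \<phi>2 e" for e
  define F2 where "F2 e = 2 * \<phi>1 e + (-1) * \<phi>2 e" for e
  have F1: "circulation E ends F1" and F2: "circulation E ends F2"
    unfolding F1_def F2_def using circulation_lincomb[OF \<phi>1(1) \<phi>2(1)] by blast+
  have F_values: "F1 e \<noteq> 0 \<and> F2 e \<noteq> 0 \<and> (\<bar>F1 e\<bar> = 1 \<or> \<bar>F2 e\<bar> = 1)" if "e \<in> E" for e
  proof -
    have "\<phi>1 e = -1 \<or> \<phi>1 e = 0 \<or> \<phi>1 e = 1" "\<phi>2 e = -1 \<or> \<phi>2 e = 0 \<or> \<phi>2 e = 1"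
      "\<phi>1 e \<noteq> 0 \<or> \<phi>2 e \<noteq> 0"
      using \<phi>1(2,3)[of e] \<phi>2(2,3)[of e] assms(4) that by auto
    then show ?thesis unfolding F1_def F2_def by (elim disjE) simp_all
  qed
  have nowhere_zero: "\<forall>e\<in>E. F1 e \<noteq> 0" "\<forall>e\<in>E. F2 e \<noteq> 0"
    using F_values by auto
  define os where "os i = (if i = 0 then (\<lambda>x. F1 x > 0) else (\<lambda>x. F2 x > 0))" for i :: nat
  have "\<exists>i<2. deletable V E ends (os i) e" if "e \<in> E" for e
  proof (cases "\<bar>F1 e\<bar> = 1")
    case True
    then have "deletable V E ends (os 0) e"
      using deletable_of_circulation[OF kc F1 nowhere_zero(1) that] by (simp add: os_def)
    then show ?thesis by (intro exI[of _ 0]) simp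
  next
    case False
    then have "deletable V E ends (os 1) e"
      using deletable_of_circulation[OF kc F2 nowhere_zero(2) that] F_values[OF that] False
      by (simp add: os_def)
    then show ?thesis by (intro exI[of _ 1]) simp
  qed
  then show ?thesis unfolding frank_cover_def by blast
qed

lemma circulation_of_nowhere_zero_flow:
  assumes "multigraph V E ends" "nowhere_zero_flow k V E ends"
  obtains g where "circulation E ends g" "\<forall>e\<in>E. g e \<noteq> 0 \<and> \<bar>g e\<bar> \<le> int k - 1"
proof -
  obtain ori and f :: "_ \<Rightarrow> int" where f: "\<forall>e\<in>E. f e \<noteq> 0 \<and> \<bar>f e\<bar> \<le> int k - 1"
    and conservation: "\<forall>v\<in>V. (\<Sum>e\<in>{e\<in>E. head ends ori e = v}. f e)
                            = (\<Sum>e\<in>{e\<in>E. tail ends ori e = v}. f e)"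
    using assms(2) unfolding nowhere_zero_flow_def by blast
  have "finite E" using assms(1) by (simp add: multigraph_def)
  define g where "g e = (if ori e then f e else - f e)" for e
  have "(\<Sum>e\<in>E. g e * incidence (ends e) v) = 0" for v
  proof (cases "v \<in> V")
    case False
    then show ?thesis using incidence_outside[OF assms(1)] by simp
  next
    case True
    have "(\<Sum>e\<in>E. g e * incidence (ends e) v)
        = (\<Sum>e\<in>E. (if head ends ori e = v then f e else 0) - (if tail ends ori e = v then f e else 0))"
      by (intro sum.cong) (auto simp: g_def incidence_def head_def tail_def)
    also have "\<dots> = (\<Sum>e\<in>{e\<in>E. head ends ori e = v}. f e) - (\<Sum>e\<in>{e\<in>E. tail ends ori e = v}. f e)"
      by (simp add: sum_subtractf sum.inter_filter[OF \<open>finite E\<close>])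
    finally show ?thesis using conservation True by simp
  qed
  then show ?thesis
    using that[of g] f by (auto simp: circulation_def g_def)
qed

text \<open>C1 is the support of the odd values of g; subtracting from g a \<plusminus>1-circulation on C1 and
  halving turns the values \<plusminus>2 of g outside C1 into odd values.\<close>

lemma even_cover_of_nowhere_zero_4_circulation:
  assumes "finite E" "circulation E ends g" "\<forall>e\<in>E. g e \<noteq> 0 \<and> \<bar>g e\<bar> \<le> 3"
  obtains C1 C2 where "even_subgraph ends C1" "even_subgraph ends C2" "C1 \<union> C2 = E"
proof -
  define C1 where "C1 = {e\<in>E. odd (g e)}"
  have C1: "even_subgraph ends C1"
    unfolding C1_def using even_subgraph_odd_part[OF assms(1,2)] .
  obtain \<phi> where \<phi>: "circulation E ends \<phi>"
    "\<And>e. e \<in> C1 \<Longrightarrow> \<phi> e = 1 \<or> \<phi> e = -1" "\<And>e. e \<notin> C1 \<Longrightarrow> \<phi> e = 0"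
    using signed_circulation_of_even_subgraph[OF assms(1) _ C1] by (auto simp: C1_def)
  have even_diff: "even (g e - \<phi> e)" if "e \<in> E" for e
    using that \<phi>(2,3)[of e] by (cases "e \<in> C1") (auto simp: C1_def)
  define \<psi> where "\<psi> e = (g e - \<phi> e) div 2" for e
  have "circulation E ends (\<lambda>e. g e - \<phi> e)"
    using circulation_lincomb[OF assms(2) \<phi>(1), of 1 "-1"] by simp
  then have "circulation E ends \<psi>"
    unfolding \<psi>_def using circulation_half even_diff by blast
  then have C2: "even_subgraph ends {e\<in>E. odd (\<psi> e)}"
    using even_subgraph_odd_part[OF assms(1)] by blast
  have "e \<in> C1 \<or> odd (\<psi> e)" if "e \<in> E" for e
  proof (cases "e \<in> C1")
    case False
    have "even (g e)" "g e \<noteq> 0" "-3 \<le> g e" "g e \<le> 3"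
      using False assms(3) that unfolding C1_def by auto
    then have "g e = 2 \<or> g e = -2" by presburger
    moreover have "\<phi> e = 0" using \<phi>(3) False .
    ultimately show ?thesis by (auto simp: \<psi>_def)
  qed simp
  then have "C1 \<union> {e\<in>E. odd (\<psi> e)} = E" by (auto simp: C1_def)
  then show ?thesis using that C1 C2 by blast
qed

definition proper_edge_colouring :: "nat \<Rightarrow> 'e set \<Rightarrow> ('e \<Rightarrow> 'v \<times> 'v) \<Rightarrow> ('e \<Rightarrow> nat) \<Rightarrow> bool" where
  "proper_edge_colouring k E ends c \<longleftrightarrow> (\<forall>e\<in>E. c e < k) \<and>
     (\<forall>e1\<in>E. \<forall>e2\<in>E. e1 \<noteq> e2 \<and>
        {fst (ends e1), snd (ends e1)} \<inter> {fst (ends e2), snd (ends e2)} \<noteq> {} \<longrightarrow> c e1 \<noteq> c e2)"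

lemma three_edge_colourable_iff:
  "three_edge_colourable V E ends \<longleftrightarrow> (\<exists>c. proper_edge_colouring 3 E ends c)"
  by (simp add: three_edge_colourable_def proper_edge_colouring_def)

lemma bij_betw_colour_incident_edges:
  assumes "k_edge_connected k V E ends" "proper_edge_colouring k E ends c" "v \<in> V"
  shows "bij_betw c (incident_edges E ends v) {..<k}"
proof -
  let ?I = "incident_edges E ends v"
  have "finite ?I"
    using assms(1) by (simp add: k_edge_connected_def multigraph_def incident_edges_def)
  have inj: "inj_on c ?I"
    using assms(2) by (intro inj_onI) (auto simp: proper_edge_colouring_def incident_edges_def)
  have sub: "c ` ?I \<subseteq> {..<k}"
    using assms(2) by (auto simp: proper_edge_colouring_def incident_edges_def)
  have "card {..<k} \<le> card (c ` ?I)"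
    using card_incident_edges_ge[OF assms(1,3)] card_image[OF inj] by simp
  then have "c ` ?I = {..<k}"
    using sub by (intro card_seteq) simp_all
  then show ?thesis using inj by (simp add: bij_betw_def)
qed

lemma even_subgraph_two_colour_classes:
  assumes kc: "k_edge_connected 3 V E ends" and c: "proper_edge_colouring 3 E ends c" and "j < 3"
  shows "even_subgraph ends {e\<in>E. c e \<noteq> j}"
  unfolding even_subgraph_def
proof
  fix v
  define C where "C = {e\<in>E. c e \<noteq> j}"
  have mg: "multigraph V E ends" and "finite E"
    and no_loop: "\<And>e. e \<in> E \<Longrightarrow> fst (ends e) \<noteq> snd (ends e)"
    using kc by (auto simp: k_edge_connected_def multigraph_def)
  show "even (\<Sum>e\<in>C. incidence (ends e) v)"
  proof (cases "v \<in> V")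
    case False
    then show ?thesis using incidence_outside[OF mg] by (simp add: C_def)
  next
    case True
    let ?I = "incident_edges E ends v"
    have bij: "bij_betw c ?I {..<3}"
      using bij_betw_colour_incident_edges[OF kc c True] .
    have "(\<Sum>e\<in>C. incidence (ends e) v) = (\<Sum>e\<in>C \<inter> ?I. incidence (ends e) v * 1)"
      using \<open>finite E\<close>
      by (simp, intro sum.mono_neutral_right) (auto simp: C_def incident_edges_def incidence_def)
    moreover have "even (\<Sum>e\<in>C \<inter> ?I. incidence (ends e) v * 1) \<longleftrightarrow> even (\<Sum>e\<in>C \<inter> ?I. 1 :: int)"
      by (rule even_sum_odd_coeffs) (auto simp: C_def incident_edges_def incidence_def dest: no_loop)
    moreover have "card (C \<inter> ?I) = 2"
    proof -
      have "bij_betw c (C \<inter> ?I) ({..<3} - {j})"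
        using bij_betw_subset[OF bij] bij unfolding bij_betw_def
        by (auto simp: C_def incident_edges_def)
      then show ?thesis using \<open>j < 3\<close> by (simp add: bij_betw_same_card)
    qed
    ultimately show ?thesis by simp
  qed
qed

lemma not_deletable_if_no_out_arc:
  assumes "v \<in> V" "w \<in> V" "v \<noteq> w" "\<forall>e\<in>E - {e0}. tail ends ori e \<noteq> v"
  shows "\<not> deletable V E ends ori e0"
proof
  assume "deletable V E ends ori e0"
  then have "(v, w) \<in> (arcs ends ori (E - {e0}))\<^sup>+"
    using assms(1-3) by (simp add: deletable_def strong_def)
  then obtain y where "(v, y) \<in> arcs ends ori (E - {e0})"
    by (auto dest: tranclD)
  then show False using assms(4) by (auto simp: arcs_def)
qed

lemma tail_reverse [simp]: "tail ends (\<lambda>e. \<not> ori e) = head ends ori"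
  by (simp add: tail_def head_def fun_eq_iff)

lemma head_reverse [simp]: "head ends (\<lambda>e. \<not> ori e) = tail ends ori"
  by (simp add: tail_def head_def fun_eq_iff)

lemma deletable_reverse:
  "deletable V E ends (\<lambda>e. \<not> ori e) e \<longleftrightarrow> deletable V E ends ori e"
proof -
  have "arcs ends (\<lambda>e. \<not> ori e) F = (arcs ends ori F)\<inverse>" for F
    by (auto simp: arcs_def)
  then show ?thesis
    by (auto simp: deletable_def strong_def trancl_converse)
qed

lemma exists_not_deletable_if_one_out_arc:
  assumes "finite E" "v \<in> V" "w \<in> V" "v \<noteq> w" "incident_edges E ends v \<noteq> {}"
    and "card {e\<in>incident_edges E ends v. tail ends ori e = v} \<le> 1"
  shows "\<exists>e\<in>E. \<not> deletable V E ends ori e"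
proof -
  let ?I = "incident_edges E ends v"
  let ?out = "{e\<in>?I. tail ends ori e = v}"
  have "\<exists>e0\<in>?I. ?out \<subseteq> {e0}"
  proof (cases "?out = {}")
    case True
    then show ?thesis using assms(5) by blast
  next
    case False
    moreover have "finite ?out"
      using assms(1) by (simp add: incident_edges_def)
    then have "\<forall>a1\<in>?out. \<forall>a2\<in>?out. a1 = a2"
      using assms(6) card_le_Suc0_iff_eq[of ?out] by simp
    ultimately show ?thesis by blast
  qed
  then obtain e0 where "e0 \<in> ?I" "?out \<subseteq> {e0}" by blast
  moreover have "\<forall>e\<in>E - {e0}. tail ends ori e \<noteq> v"
    using calculation by (auto simp: incident_edges_def tail_def split: if_splits)
  ultimately show ?thesis
    using not_deletable_if_no_out_arc[OF assms(2-4), of E e0 ends ori]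
    by (auto simp: incident_edges_def)
qed

lemma exists_not_deletable_at_small_degree:
  assumes "multigraph V E ends" "v \<in> V" "w \<in> V" "v \<noteq> w"
    and "incident_edges E ends v \<noteq> {}" "card (incident_edges E ends v) \<le> 3"
  shows "\<exists>e\<in>E. \<not> deletable V E ends ori e"
proof -
  let ?I = "incident_edges E ends v"
  let ?out = "\<lambda>ori. {e\<in>?I. tail ends ori e = v}"
  have "finite E" using assms(1) by (simp add: multigraph_def)
  then have "finite ?I" by (simp add: incident_edges_def)
  note few_out = exists_not_deletable_if_one_out_arc[OF \<open>finite E\<close> assms(2-5)]
  have no_loop: "fst (ends e) \<noteq> snd (ends e)" if "e \<in> E" for e
    using assms(1) that by (simp add: multigraph_def)
  have "?out ori \<union> ?out (\<lambda>e. \<not> ori e) = ?I"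
    by (auto simp: incident_edges_def tail_def head_def)
  moreover have "?out ori \<inter> ?out (\<lambda>e. \<not> ori e) = {}"
    by (auto simp: incident_edges_def tail_def head_def split: if_splits dest: no_loop)
  ultimately have "card (?out ori) + card (?out (\<lambda>e. \<not> ori e)) = card ?I"
    using \<open>finite ?I\<close> card_Un_disjoint[of "?out ori" "?out (\<lambda>e. \<not> ori e)"] by simp
  then consider "card (?out ori) \<le> 1" | "card (?out (\<lambda>e. \<not> ori e)) \<le> 1"
    using assms(6) by linarith
  then show ?thesis
  proof cases
    case 1
    then show ?thesis by (rule few_out)
  next
    case 2
    then show ?thesis using few_out[of "\<lambda>e. \<not> ori e"] by (simp add: deletable_reverse)
  qed
qed

lemma not_frank_cover_1_at_small_degree:
  assumes "multigraph V E ends" "2 \<le> card V" "v \<in> V"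
    and "incident_edges E ends v \<noteq> {}" "card (incident_edges E ends v) \<le> 3"
  shows "\<not> frank_cover V E ends 1"
proof -
  obtain w where "w \<in> V" "w \<noteq> v"
    using exists_other_vertex assms(1-3) by (metis multigraph_def)
  then have "\<exists>e\<in>E. \<not> deletable V E ends ori e" for ori
    using exists_not_deletable_at_small_degree[OF assms(1,3)] assms(4,5) by simp
  then show ?thesis by (simp add: frank_cover_def)
qed

lemma frank_number_le_2_of_nowhere_zero_4_flow:
  assumes "k_edge_connected 3 V E ends" "nowhere_zero_flow 4 V E ends"
  shows "frank_number V E ends \<le> 2"
proof -
  have mg: "multigraph V E ends" and "finite E"
    using assms(1) by (auto simp: k_edge_connected_def multigraph_def)
  obtain g where g: "circulation E ends g" "\<forall>e\<in>E. g e \<noteq> 0 \<and> \<bar>g e\<bar> \<le> int 4 - 1"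
    by (rule circulation_of_nowhere_zero_flow[OF mg assms(2)])
  obtain C1 C2 where "even_subgraph ends C1" "even_subgraph ends C2" "C1 \<union> C2 = E"
    using even_cover_of_nowhere_zero_4_circulation[OF \<open>finite E\<close> g(1)] g(2) by auto
  then show ?thesis
    by (intro frank_number_le frank_cover_2_of_even_cover[OF assms(1)])
qed

lemma frank_number_eq_2_of_three_edge_colourable:
  assumes kc: "k_edge_connected 3 V E ends" and "three_edge_colourable V E ends"
  shows "frank_number V E ends = 2"
proof (rule frank_number_eqI)
  obtain c where c: "proper_edge_colouring 3 E ends c"
    using assms(2) by (auto simp: three_edge_colourable_iff)
  have "{e\<in>E. c e \<noteq> 1} \<union> {e\<in>E. c e \<noteq> 2} = E" by auto
  then show "frank_cover V E ends 2"
    using frank_cover_2_of_even_cover[OF kc even_subgraph_two_colour_classes[OF kc c, of 1]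
        even_subgraph_two_colour_classes[OF kc c, of 2]]
    by simp
  have mg: "multigraph V E ends" and "2 \<le> card V"
    using kc by (auto simp: k_edge_connected_def)
  then obtain v where "v \<in> V" by fastforce
  have "card (incident_edges E ends v) = 3"
    using bij_betw_colour_incident_edges[OF kc c \<open>v \<in> V\<close>] by (simp add: bij_betw_same_card)
  then show "\<not> frank_cover V E ends (2 - 1)"
    using not_frank_cover_1_at_small_degree[OF mg \<open>2 \<le> card V\<close> \<open>v \<in> V\<close>] by fastforce
qed

theorem theorem2:
  fixes V :: "'v set" and E :: "'e set" and ends :: "'e \<Rightarrow> 'v \<times> 'v"
  assumes "k_edge_connected 3 V E ends"
  shows "(nowhere_zero_flow 4 V E ends \<longrightarrow> frank_number V E ends \<le> 2) \<and>
         (three_edge_colourable V E ends \<longrightarrow> frank_number V E ends = 2)"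
  using frank_number_le_2_of_nowhere_zero_4_flow[OF assms]
    frank_number_eq_2_of_three_edge_colourable[OF assms]
  by blast

end
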